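(* Let $\Gamma$ be the banana graph of genus $g\ge1$: two vertices $v_1,v_2$ joined by $n=g+1$ edges $e_1,\dots,e_n$. Fix any orientation $\iota$ of $\Gamma$. Let $B_0\in\mathbb Z^{g\times n}$ have $(B_0)_{i,1}=1$, $(B_0)_{i,i+1}=-1$ and other entries $0$, let $S$ be the $n\times n$ diagonal matrix with $S_{jj}=1$ if $\iota$ orients $e_j$ from $v_2$ to $v_1$ and $S_{jj}=-1$ otherwise, and set $B=B_0S$ and $Q=BB^T$. Then the map $\phi$ sending a vertex $\mathbf a$ of $V_Q$ to the orientation $\iota_{\mathbf a}$ of $\Gamma$ defined by: $\iota_{\mathbf a}(e_i)=\iota(e_i)$ if $(B^T\mathbf a)_i>0$, and $\iota_{\mathbf a}(e_i)$ is the reverse of $\iota(e_i)$ if $(B^T\mathbf a)_i<0$, is a well-defined bijection from the vertex set of $V_Q$ onto the set $\mathcal O(\Gamma)$ of strongly connected orientations of $\Gamma$; moreover the orientation $\iota_{\mathbf a}$ does not depend on the choice of $\iota$.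
   Context: $V_Q=\{\mathbf a\in\mathbb R^g:\ \mathbf a^TQ\mathbf a\le(\mathbf a-\mathbf c)^TQ(\mathbf a-\mathbf c)\ \forall\mathbf c\in\mathbb Z^g\}$. Rows of $B$ are the coordinates, with respect to the $\iota$-oriented edges, of the cycles $e_1-e_{i+1}$ ($i=1,\dots,g$) (written for the orientation in which every edge goes from $v_2$ to $v_1$). An orientation of a connected graph is strongly connected if for every ordered pair of vertices $(u,v)$ there is a directed path from $u$ to $v$. *)

theory Defs
  imports "HOL-Analysis.Analysis"
begin

text \<open>Coordinates of Z^g / R^g are indexed by a finite type 'g (g = CARD('g) \<ge> 1);
  edges are indexed by 'g option: None is e_1, Some i is e_(i+1).\<close>

datatype bvert = V1 | V2

text \<open>An orientation assigns to each edge its (tail, head) pair.\<close>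
definition is_orientation :: "('g option \<Rightarrow> bvert \<times> bvert) \<Rightarrow> bool" where
  "is_orientation \<iota> \<longleftrightarrow> (\<forall>e. \<iota> e = (V2, V1) \<or> \<iota> e = (V1, V2))"

definition strongly_connected_ori :: "('g option \<Rightarrow> bvert \<times> bvert) \<Rightarrow> bool" where
  "strongly_connected_ori \<iota> \<longleftrightarrow> (\<forall>u v. (u, v) \<in> (range \<iota>)\<^sup>*)"

definition B0mat :: "real ^ ('g::finite option) ^ 'g" where
  "B0mat = (\<chi> i j. if j = None then 1 else if j = Some i then -1 else 0)"

definition Smat :: "('g::finite option \<Rightarrow> bvert \<times> bvert) \<Rightarrow> real ^ ('g option) ^ ('g option)" where
  "Smat \<iota> = (\<chi> j k. if j = k then (if \<iota> j = (V2, V1) then 1 else -1) else 0)"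

definition Bmat :: "('g::finite option \<Rightarrow> bvert \<times> bvert) \<Rightarrow> real ^ ('g option) ^ 'g" where
  "Bmat \<iota> = B0mat ** Smat \<iota>"

definition Qmat :: "('g::finite option \<Rightarrow> bvert \<times> bvert) \<Rightarrow> real ^ 'g ^ 'g" where
  "Qmat \<iota> = Bmat \<iota> ** transpose (Bmat \<iota>)"

definition voronoi_cell :: "real ^ 'g ^ 'g \<Rightarrow> (real ^ 'g::finite) set" where
  "voronoi_cell Q = {a. \<forall>c. (\<forall>i. c $ i \<in> \<int>) \<longrightarrow>
       a \<bullet> (Q *v a) \<le> (a - c) \<bullet> (Q *v (a - c))}"

definition ori_of_vertex ::
  "('g::finite option \<Rightarrow> bvert \<times> bvert) \<Rightarrow> real ^ 'g \<Rightarrow> ('g option \<Rightarrow> bvert \<times> bvert)" where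
  "ori_of_vertex \<iota> a = (\<lambda>e. if (transpose (Bmat \<iota>) *v a) $ e > 0 then \<iota> e else prod.swap (\<iota> e))"

end

theory Submission
  imports Defs
begin

text \<open>Put \<open>x = B\<^sub>0\<^sup>T a\<close>. Since \<open>S\<close> is a diagonal sign matrix, \<open>a\<^sup>T Q a = |x|\<^sup>2\<close>, and \<open>a \<mapsto> x\<close> is a
  linear bijection from \<open>\<real>\<^sup>g\<close> onto the hyperplane \<open>\<Sum>x = 0\<close> carrying \<open>\<int>\<^sup>g\<close> onto the root lattice
  \<open>A\<^sub>g = {w \<in> \<int>\<^sup>n. \<Sum>w = 0}\<close>. So \<open>V\<^sub>Q\<close> is mapped onto the Voronoi cell of \<open>A\<^sub>g\<close>, the polytope
  \<open>{x. \<Sum>x = 0, x\<^sub>j - x\<^sub>k \<le> 1}\<close>, whose vertices are the two-level vectors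
  \<open>x\<^sub>e = |S|/n - [e \<in> S]\<close> for \<open>{} \<noteq> S \<noteq> E\<close>. The sign of \<open>(B\<^sup>T a)\<^sub>e\<close> relative to \<open>\<iota>\<close> only
  records whether \<open>e \<in> S\<close>, so \<open>\<iota>\<^sub>a\<close> directs exactly the edges of \<open>S\<close> from \<open>v\<^sub>1\<close> to \<open>v\<^sub>2\<close>; and an
  orientation of the banana graph is strongly connected iff both directions occur.\<close>

lemma Ints_two_mult_le_square_add:
  fixes w d :: real
  assumes "w \<in> \<int>" "0 \<le> d" "d \<le> 1"
  shows "2 * (d * w) \<le> w * w + w"
proof -
  from \<open>w \<in> \<int>\<close> obtain n where n: "w = of_int n" by (auto elim: Ints_cases)
  consider "n \<ge> 1" | "n = 0" | "n \<le> -1" by linarith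
  then have "0 \<le> w * (w + 1 - 2 * d)"
  proof cases
    case 1
    then show ?thesis using n assms by (intro mult_nonneg_nonneg) auto
  next
    case 3
    then show ?thesis using n assms by (intro mult_nonpos_nonpos) auto
  qed (simp add: n)
  then show ?thesis by (simp add: algebra_simps)
qed

lemma convex_combination_eq_one:
  fixes u p q :: real
  assumes "0 < u" "u < 1" "p \<le> 1" "q \<le> 1" "(1 - u) * p + u * q = 1"
  shows "p = 1" "q = 1"
proof -
  have "(1 - u) * (1 - p) + u * (1 - q) = 0" using assms(5) by (simp add: algebra_simps)
  moreover have "0 \<le> (1 - u) * (1 - p)" "0 \<le> u * (1 - q)" using assms(1-4) by simp_all
  ultimately have "(1 - u) * (1 - p) = 0" "u * (1 - q) = 0" by linarith+
  then show "p = 1" "q = 1" using assms(1,2) by simp_all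
qed

lemma not_extreme_point_of_symmetric:
  fixes x d :: "'a::real_vector"
  assumes "x + d \<in> S" "x - d \<in> S" "d \<noteq> 0"
  shows "\<not> x extreme_point_of S"
proof -
  have "x = midpoint (x - d) (x + d)" by (simp add: midpoint_def scaleR_2 flip: scaleR_add_right)
  moreover have "x - d \<noteq> x + d"
  proof
    assume "x - d = x + d"
    then have "2 *\<^sub>R d = 0" by (simp add: scaleR_2 algebra_simps)
    then show False using \<open>d \<noteq> 0\<close> by simp
  qed
  ultimately have "x \<in> open_segment (x - d) (x + d)" by (metis midpoint_in_open_segment)
  then show ?thesis using assms(1,2) by (auto simp: extreme_point_of_def)
qed

lemma extreme_point_of_linear_image:
  assumes "linear f" "inj f"
  shows "f x extreme_point_of f ` S \<longleftrightarrow> x extreme_point_of S"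
  using face_of_linear_image[OF assms, of "{x}" S] by (simp add: face_of_singleton)

text \<open>The Voronoi cell of the root lattice \<open>{w \<in> \<int>\<^sup>n. \<Sum>w = 0}\<close>, \<open>n = CARD('n)\<close>, inside the
  hyperplane \<open>\<Sum>y = 0\<close>; see \<open>A_lattice_voronoi_iff\<close>.\<close>

definition A_voronoi_cell :: "(real ^ 'n::finite) set" where
  "A_voronoi_cell = {y. (\<Sum>e\<in>UNIV. y $ e) = 0 \<and> (\<forall>j k. y $ j - y $ k \<le> 1)}"

lemma A_lattice_voronoi_iff:
  fixes y :: "real ^ 'n::finite"
  shows "(\<forall>w. (\<forall>e. w $ e \<in> \<int>) \<longrightarrow> (\<Sum>e\<in>UNIV. w $ e) = 0 \<longrightarrow> 2 * (y \<bullet> w) \<le> w \<bullet> w)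
         \<longleftrightarrow> (\<forall>j k. y $ j - y $ k \<le> 1)"
proof (intro iffI allI)
  fix j k
  assume voronoi: "\<forall>w. (\<forall>e. w $ e \<in> \<int>) \<longrightarrow> (\<Sum>e\<in>UNIV. w $ e) = 0 \<longrightarrow> 2 * (y \<bullet> w) \<le> w \<bullet> w"
  show "y $ j - y $ k \<le> 1"
  proof (cases "j = k")
    case False
    define w :: "real ^ 'n" where "w = axis j 1 - axis k 1"
    have "(\<forall>e. w $ e \<in> \<int>) \<and> (\<Sum>e\<in>UNIV. w $ e) = 0"
      by (simp add: w_def axis_def sum_subtractf)
    then have "2 * (y \<bullet> w) \<le> w \<bullet> w" using voronoi by blast
    moreover have "y \<bullet> w = y $ j - y $ k"
      by (simp add: w_def inner_diff_right inner_axis)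
    moreover have "w \<bullet> w = 2"
      using False by (simp add: w_def inner_diff_left inner_diff_right inner_axis_axis)
    ultimately show ?thesis by simp
  qed simp
next
  fix w :: "real ^ 'n"
  assume width: "\<forall>j k. y $ j - y $ k \<le> 1"
  define m where "m = Min (range (\<lambda>e. y $ e))"
  have "m \<in> range (\<lambda>e. y $ e)" unfolding m_def by (rule Min_in) auto
  then obtain e0 where "m = y $ e0" by blast
  moreover have "m \<le> y $ e" for e unfolding m_def by (rule Min_le) auto
  ultimately have shifted: "0 \<le> y $ e - m" "y $ e - m \<le> 1" for e
    using width by auto
  show "(\<forall>e. w $ e \<in> \<int>) \<longrightarrow> (\<Sum>e\<in>UNIV. w $ e) = 0 \<longrightarrow> 2 * (y \<bullet> w) \<le> w \<bullet> w"
  proof (intro impI)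
    assume int: "\<forall>e. w $ e \<in> \<int>" and sum0: "(\<Sum>e\<in>UNIV. w $ e) = 0"
    have "(\<Sum>e\<in>UNIV. 2 * ((y $ e - m) * w $ e)) = 2 * (y \<bullet> w) - 2 * m * (\<Sum>e\<in>UNIV. w $ e)"
      by (simp add: inner_vec_def sum_subtractf sum_distrib_left left_diff_distrib right_diff_distrib
          mult.commute mult.left_commute)
    then have "2 * (y \<bullet> w) = (\<Sum>e\<in>UNIV. 2 * ((y $ e - m) * w $ e))"
      using sum0 by simp
    also have "\<dots> \<le> (\<Sum>e\<in>UNIV. w $ e * w $ e + w $ e)"
      using int shifted by (intro sum_mono Ints_two_mult_le_square_add) auto
    also have "\<dots> = w \<bullet> w"
      using sum0 by (simp add: inner_vec_def sum.distrib)
    finally show "2 * (y \<bullet> w) \<le> w \<bullet> w" .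
  qed
qed

definition cell_vertex :: "'n::finite set \<Rightarrow> real ^ 'n" where
  "cell_vertex S = (\<chi> e. real (card S) / real CARD('n) - (if e \<in> S then 1 else 0))"

lemma zero_sum_two_level_eq_cell_vertex:
  fixes z :: "real ^ 'n::finite"
  assumes "(\<Sum>e\<in>UNIV. z $ e) = 0" and "\<And>e. z $ e = t - (if e \<in> S then 1 else 0)"
  shows "z = cell_vertex S"
proof -
  have "real CARD('n) * t - real (card S) = 0"
    using assms by (simp add: sum_subtractf sum.If_cases)
  then have "t = real (card S) / real CARD('n)"
    by (simp add: field_simps)
  then show ?thesis using assms(2) by (simp add: cell_vertex_def vec_eq_iff)
qed

lemma cell_vertex_level_bounds:
  assumes "S \<noteq> {}" "S \<noteq> (UNIV :: 'n::finite set)"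
  shows "0 < real (card S) / real CARD('n)" "real (card S) / real CARD('n) < 1"
proof -
  have "0 < card S" using assms(1) by (simp add: card_gt_0_iff)
  moreover have "card S < CARD('n)" using assms(2) by (intro psubset_card_mono) auto
  ultimately show "0 < real (card S) / real CARD('n)" "real (card S) / real CARD('n) < 1"
    by simp_all
qed

lemma cell_vertex_pos_iff:
  assumes "S \<noteq> {}" "S \<noteq> UNIV"
  shows "0 < cell_vertex S $ e \<longleftrightarrow> e \<notin> S"
  using cell_vertex_level_bounds[OF assms] by (simp add: cell_vertex_def)

lemma cell_vertex_nonzero:
  assumes "S \<noteq> {}" "S \<noteq> UNIV"
  shows "cell_vertex S $ e \<noteq> 0"
  using assms cell_vertex_level_bounds[OF assms] by (simp add: cell_vertex_def)

lemma inj_on_cell_vertex: "inj_on cell_vertex {S. S \<noteq> {} \<and> S \<noteq> UNIV}"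
proof (rule inj_onI)
  fix S T :: "'n::finite set"
  assume "S \<in> {S. S \<noteq> {} \<and> S \<noteq> UNIV}" "T \<in> {S. S \<noteq> {} \<and> S \<noteq> UNIV}"
    and "cell_vertex S = cell_vertex T"
  then have "e \<in> S \<longleftrightarrow> e \<in> T" for e
    using cell_vertex_pos_iff[of S e] cell_vertex_pos_iff[of T e] by auto
  then show "S = T" by blast
qed

lemma sum_cell_vertex: "(\<Sum>e\<in>UNIV. cell_vertex S $ e) = 0"
  by (simp add: cell_vertex_def sum_subtractf sum.If_cases)

lemma cell_vertex_in_A_voronoi_cell: "cell_vertex S \<in> A_voronoi_cell"
  unfolding A_voronoi_cell_def by (simp add: sum_cell_vertex) (simp add: cell_vertex_def)

lemma zero_sum_unit_gap_eq_cell_vertex: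
  fixes z :: "real ^ 'n::finite"
  assumes "(\<Sum>e\<in>UNIV. z $ e) = 0" "S \<noteq> {}" "S \<noteq> UNIV"
    and gap: "\<And>j l. j \<notin> S \<Longrightarrow> l \<in> S \<Longrightarrow> z $ j - z $ l = 1"
  shows "z = cell_vertex S"
proof -
  obtain p q where "p \<notin> S" "q \<in> S" using assms(2,3) by blast
  then have "z $ e = z $ p - (if e \<in> S then 1 else 0)" for e
    using gap[of p e] gap[of e q] gap[of p q] by auto
  then show ?thesis by (rule zero_sum_two_level_eq_cell_vertex[OF assms(1)])
qed

lemma cell_vertex_extreme_point:
  assumes "S \<noteq> {}" "S \<noteq> UNIV"
  shows "cell_vertex S extreme_point_of A_voronoi_cell"
  unfolding extreme_point_of_def
proof (intro conjI ballI cell_vertex_in_A_voronoi_cell notI)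
  fix b c assume "b \<in> A_voronoi_cell" "c \<in> A_voronoi_cell" "cell_vertex S \<in> open_segment b c"
  then obtain u where "b \<noteq> c" "0 < u" "u < 1" and y: "cell_vertex S = (1 - u) *\<^sub>R b + u *\<^sub>R c"
    and b: "(\<Sum>e\<in>UNIV. b $ e) = 0" "\<And>j l. b $ j - b $ l \<le> 1"
    and c: "(\<Sum>e\<in>UNIV. c $ e) = 0" "\<And>j l. c $ j - c $ l \<le> 1"
    by (auto simp: in_segment A_voronoi_cell_def)
  have "b $ j - b $ l = 1 \<and> c $ j - c $ l = 1" if "j \<notin> S" "l \<in> S" for j l
  proof -
    have "(1 - u) * (b $ j - b $ l) + u * (c $ j - c $ l) = cell_vertex S $ j - cell_vertex S $ l"
      by (simp add: y algebra_simps)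
    also have "\<dots> = 1" using that by (simp add: cell_vertex_def)
    finally show ?thesis using convex_combination_eq_one[OF \<open>0 < u\<close> \<open>u < 1\<close> b(2) c(2)] by blast
  qed
  then have "b = cell_vertex S" "c = cell_vertex S"
    using zero_sum_unit_gap_eq_cell_vertex[OF b(1) assms] zero_sum_unit_gap_eq_cell_vertex[OF c(1) assms]
    by blast+
  then show False using \<open>b \<noteq> c\<close> by simp
qed

lemma A_voronoi_cell_shift_coordinate:
  fixes y :: "real ^ 'n::finite"
  assumes "y \<in> A_voronoi_cell" and slack: "\<And>j. \<bar>y $ k - y $ j\<bar> \<le> 1 - \<delta>" and "\<bar>t\<bar> \<le> \<delta>"
  shows "y + t *\<^sub>R (\<chi> e. (if e = k then 1 else 0) - 1 / real CARD('n)) \<in> A_voronoi_cell"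
    (is "y + t *\<^sub>R ?d \<in> _")
proof -
  have "(y + t *\<^sub>R ?d) $ j - (y + t *\<^sub>R ?d) $ l \<le> 1" for j l
  proof -
    have diff: "(y + t *\<^sub>R ?d) $ j - (y + t *\<^sub>R ?d) $ l
        = y $ j - y $ l + t * ((if j = k then 1 else 0) - (if l = k then 1 else 0))"
      by (simp add: algebra_simps)
    consider "j = k" "l \<noteq> k" | "j \<noteq> k" "l = k" | "j = k \<longleftrightarrow> l = k" by blast
    then show ?thesis
    proof cases
      case 1
      moreover have "y $ k - y $ l \<le> \<bar>y $ k - y $ l\<bar>" "t \<le> \<bar>t\<bar>" by simp_all
      ultimately show ?thesis unfolding diff using slack[of l] \<open>\<bar>t\<bar> \<le> \<delta>\<close> by simp
    next
      case 2
      moreover have "y $ j - y $ k \<le> \<bar>y $ k - y $ j\<bar>" "- t \<le> \<bar>t\<bar>" by simp_all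
      ultimately show ?thesis unfolding diff using slack[of j] \<open>\<bar>t\<bar> \<le> \<delta>\<close> by simp
    next
      case 3
      then show ?thesis unfolding diff using assms(1) by (auto simp: A_voronoi_cell_def)
    qed
  qed
  moreover have "(\<Sum>e\<in>UNIV. ?d $ e) = 0" by (simp add: sum_subtractf)
  then have "(\<Sum>e\<in>UNIV. (y + t *\<^sub>R ?d) $ e) = 0"
    using assms(1) by (simp add: A_voronoi_cell_def sum.distrib flip: sum_distrib_left)
  ultimately show ?thesis by (simp add: A_voronoi_cell_def)
qed

lemma not_extreme_point_of_A_voronoi_cell:
  fixes y :: "real ^ 'n::finite"
  assumes "2 \<le> CARD('n)" "y \<in> A_voronoi_cell" and no_gap: "\<And>j. \<bar>y $ k - y $ j\<bar> < 1"
  shows "\<not> y extreme_point_of A_voronoi_cell"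
proof -
  define \<delta> where "\<delta> = Min (range (\<lambda>j. 1 - \<bar>y $ k - y $ j\<bar>))"
  have "\<delta> \<in> range (\<lambda>j. 1 - \<bar>y $ k - y $ j\<bar>)" unfolding \<delta>_def by (rule Min_in) auto
  then have "0 < \<delta>" using no_gap by auto
  have "\<delta> \<le> 1 - \<bar>y $ k - y $ j\<bar>" for j unfolding \<delta>_def by (rule Min_le) auto
  then have slack: "\<bar>y $ k - y $ j\<bar> \<le> 1 - \<delta>" for j by (simp add: algebra_simps)
  define d :: "real ^ 'n" where "d = \<delta> *\<^sub>R (\<chi> e. (if e = k then 1 else 0) - 1 / real CARD('n))"
  have "y + d \<in> A_voronoi_cell" "y - d \<in> A_voronoi_cell"
    using A_voronoi_cell_shift_coordinate[OF assms(2) slack, of \<delta>]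
      A_voronoi_cell_shift_coordinate[OF assms(2) slack, of "- \<delta>"] \<open>0 < \<delta>\<close>
    by (simp_all add: d_def)
  moreover have "d \<noteq> 0"
  proof -
    have "\<not> UNIV \<subseteq> {k}"
    proof
      assume "UNIV \<subseteq> {k}"
      then have "CARD('n) \<le> card {k}" by (intro card_mono) auto
      then show False using assms(1) by simp
    qed
    then obtain j where "j \<noteq> k" by blast
    then have "d $ j \<noteq> 0" using \<open>0 < \<delta>\<close> by (simp add: d_def)
    then show ?thesis by auto
  qed
  ultimately show ?thesis by (rule not_extreme_point_of_symmetric)
qed

lemma extreme_point_of_A_voronoi_cellE:
  fixes y :: "real ^ 'n::finite"
  assumes "2 \<le> CARD('n)" "y extreme_point_of A_voronoi_cell"
  obtains S where "S \<noteq> {}" "S \<noteq> UNIV" "y = cell_vertex S"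
proof -
  have y: "y \<in> A_voronoi_cell" using assms(2) by (simp add: extreme_point_of_def)
  then have sum0: "(\<Sum>e\<in>UNIV. y $ e) = 0" and width: "\<And>j l. y $ j - y $ l \<le> 1"
    by (auto simp: A_voronoi_cell_def)
  have gap: "\<exists>j. \<bar>y $ k - y $ j\<bar> = 1" for k
  proof (rule ccontr)
    assume no_gap: "\<nexists>j. \<bar>y $ k - y $ j\<bar> = 1"
    have "\<bar>y $ k - y $ j\<bar> < 1" for j
    proof -
      have "\<bar>y $ k - y $ j\<bar> \<le> 1" using width[of k j] width[of j k] by (simp add: abs_le_iff)
      moreover have "\<bar>y $ k - y $ j\<bar> \<noteq> 1" using no_gap by blast
      ultimately show ?thesis by linarith
    qed
    then show False using not_extreme_point_of_A_voronoi_cell[OF assms(1) y] assms(2) by blast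
  qed
  define M where "M = Max (range (\<lambda>e. y $ e))"
  have "M \<in> range (\<lambda>e. y $ e)" unfolding M_def by (rule Max_in) auto
  then obtain p where p: "y $ p = M" by auto
  have upper: "y $ e \<le> M" for e unfolding M_def by (rule Max_ge) auto
  have lower: "M - 1 \<le> y $ e" for e using width[of p e] p by simp
  define S where "S = {e. y $ e \<noteq> M}"
  have levels: "y $ e = M - (if e \<in> S then 1 else 0)" for e
  proof -
    obtain j where "\<bar>y $ e - y $ j\<bar> = 1" using gap by blast
    then show ?thesis using upper[of e] upper[of j] lower[of e] lower[of j] by (auto simp: S_def)
  qed
  show thesis
  proof
    obtain j where "\<bar>M - y $ j\<bar> = 1" using gap[of p] p by auto
    then have "j \<in> S" using upper[of j] by (auto simp: S_def)
    then show "S \<noteq> {}" by blast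
    show "S \<noteq> UNIV" using p by (auto simp: S_def)
    show "y = cell_vertex S" using sum0 levels by (rule zero_sum_two_level_eq_cell_vertex)
  qed
qed

lemma extreme_points_A_voronoi_cell:
  assumes "2 \<le> CARD('n::finite)"
  shows "{y :: real ^ 'n. y extreme_point_of A_voronoi_cell}
    = cell_vertex ` {S. S \<noteq> {} \<and> S \<noteq> UNIV}"
  using extreme_point_of_A_voronoi_cellE[OF assms] cell_vertex_extreme_point by blast

lemma sum_UNIV_option:
  fixes f :: "'g::finite option \<Rightarrow> 'a::comm_monoid_add"
  shows "(\<Sum>e\<in>UNIV. f e) = f None + (\<Sum>i\<in>UNIV. f (Some i))"
proof -
  have "(\<Sum>e\<in>UNIV. f e) = f None + (\<Sum>e\<in>range Some. f e)"
    by (simp add: UNIV_option_conv)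
  also have "(\<Sum>e\<in>range Some. f e) = (\<Sum>i\<in>UNIV. f (Some i))"
    by (simp add: sum.reindex)
  finally show ?thesis .
qed

lemma card_option_ge_2: "2 \<le> CARD('g::finite option)"
  using card_mono[of UNIV "{None, Some (undefined :: 'g)}"] by simp

definition edge_vec :: "real ^ 'g::finite \<Rightarrow> real ^ 'g option" where
  "edge_vec a = transpose B0mat *v a"

lemma edge_vec_None: "edge_vec a $ None = (\<Sum>i\<in>UNIV. a $ i)"
  by (simp add: edge_vec_def B0mat_def matrix_vector_mult_def transpose_def)

lemma edge_vec_Some: "edge_vec a $ Some i = - a $ i"
proof -
  have "edge_vec a $ Some i = (\<Sum>j\<in>UNIV. if i = j then - a $ j else 0)"
    unfolding edge_vec_def B0mat_def matrix_vector_mult_def transpose_def vec_lambda_beta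
    by (rule sum.cong) auto
  then show ?thesis by simp
qed

lemma sum_edge_vec: "(\<Sum>e\<in>UNIV. edge_vec a $ e) = 0"
  by (simp add: sum_UNIV_option edge_vec_None edge_vec_Some sum_negf)

lemma linear_edge_vec: "linear edge_vec"
  unfolding edge_vec_def by (rule matrix_vector_mul_linear)

lemma inj_edge_vec: "inj edge_vec"
  by (rule injI) (metis edge_vec_Some neg_equal_iff_equal vec_eq_iff)

lemma edge_vec_preimage:
  assumes "(\<Sum>e\<in>UNIV. y $ e) = 0"
  shows "edge_vec (\<chi> i. - y $ Some i) = y"
proof -
  have "edge_vec (\<chi> i. - y $ Some i) $ e = y $ e" for e
    using assms by (cases e) (simp_all add: edge_vec_None edge_vec_Some sum_UNIV_option sum_negf)
  then show ?thesis by (simp add: vec_eq_iff)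
qed

lemma edge_vec_integer_points:
  "edge_vec ` {c. \<forall>i. c $ i \<in> \<int>} = {w. (\<forall>e. w $ e \<in> \<int>) \<and> (\<Sum>e\<in>UNIV. w $ e) = 0}"
proof (intro equalityI subsetI)
  fix w assume "w \<in> edge_vec ` {c. \<forall>i. c $ i \<in> \<int>}"
  then obtain c where c: "\<forall>i. c $ i \<in> \<int>" and "w = edge_vec c" by blast
  moreover have "edge_vec c $ e \<in> \<int>" for e
    using c by (cases e) (auto simp: edge_vec_None edge_vec_Some)
  ultimately show "w \<in> {w. (\<forall>e. w $ e \<in> \<int>) \<and> (\<Sum>e\<in>UNIV. w $ e) = 0}"
    by (simp add: sum_edge_vec)
next
  fix w :: "real ^ 'g::finite option"
  assume "w \<in> {w. (\<forall>e. w $ e \<in> \<int>) \<and> (\<Sum>e\<in>UNIV. w $ e) = 0}"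
  then have "w = edge_vec (\<chi> i. - w $ Some i)" "\<forall>i. (\<chi> i. - w $ Some i) $ i \<in> \<int>"
    by (simp_all add: edge_vec_preimage)
  then show "w \<in> edge_vec ` {c. \<forall>i. c $ i \<in> \<int>}" by blast
qed

definition edge_sign :: "('g option \<Rightarrow> bvert \<times> bvert) \<Rightarrow> 'g option \<Rightarrow> real" where
  "edge_sign \<iota> e = (if \<iota> e = (V2, V1) then 1 else -1)"

lemma transpose_Bmat_mult: "(transpose (Bmat \<iota>) *v a) $ e = edge_sign \<iota> e * edge_vec a $ e"
  by (simp add: Bmat_def Smat_def edge_sign_def edge_vec_def matrix_matrix_mult_def
      matrix_vector_mult_def transpose_def if_distrib sum_negf cong: if_cong)

lemma Qmat_quadratic_form: "a \<bullet> (Qmat \<iota> *v a) = edge_vec a \<bullet> edge_vec a"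
proof -
  have "a \<bullet> (Qmat \<iota> *v a) = (transpose (Bmat \<iota>) *v a) \<bullet> (transpose (Bmat \<iota>) *v a)"
    by (simp add: Qmat_def dot_lmul_matrix flip: matrix_vector_mul_assoc)
  also have "\<dots> = edge_vec a \<bullet> edge_vec a"
    unfolding inner_vec_def transpose_Bmat_mult by (rule sum.cong) (auto simp: edge_sign_def)
  finally show ?thesis .
qed

lemma voronoi_cell_Qmat_iff: "a \<in> voronoi_cell (Qmat \<iota>) \<longleftrightarrow> edge_vec a \<in> A_voronoi_cell"
proof -
  have "a \<in> voronoi_cell (Qmat \<iota>) \<longleftrightarrow>
      (\<forall>c. (\<forall>i. c $ i \<in> \<int>) \<longrightarrow> 2 * (edge_vec a \<bullet> edge_vec c) \<le> edge_vec c \<bullet> edge_vec c)"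
    unfolding voronoi_cell_def Qmat_quadratic_form linear_diff[OF linear_edge_vec]
    by (simp add: inner_diff_left inner_diff_right inner_commute)
  also have "\<dots> \<longleftrightarrow> (\<forall>w\<in>edge_vec ` {c. \<forall>i. c $ i \<in> \<int>}. 2 * (edge_vec a \<bullet> w) \<le> w \<bullet> w)"
    by blast
  also have "\<dots> \<longleftrightarrow> (\<forall>w. (\<forall>e. w $ e \<in> \<int>) \<longrightarrow> (\<Sum>e\<in>UNIV. w $ e) = 0 \<longrightarrow>
      2 * (edge_vec a \<bullet> w) \<le> w \<bullet> w)"
    unfolding edge_vec_integer_points by blast
  also have "\<dots> \<longleftrightarrow> edge_vec a \<in> A_voronoi_cell"
    by (simp add: A_lattice_voronoi_iff A_voronoi_cell_def sum_edge_vec)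
  finally show ?thesis .
qed

lemma edge_vec_voronoi_cell:
  fixes \<iota> :: "'g::finite option \<Rightarrow> bvert \<times> bvert"
  shows "edge_vec ` voronoi_cell (Qmat \<iota>) = A_voronoi_cell"
proof (intro equalityI subsetI)
  fix y :: "real ^ 'g option" assume "y \<in> A_voronoi_cell"
  moreover from this have "y = edge_vec (\<chi> i. - y $ Some i)"
    by (simp add: A_voronoi_cell_def edge_vec_preimage)
  ultimately show "y \<in> edge_vec ` voronoi_cell (Qmat \<iota>)"
    by (metis image_eqI voronoi_cell_Qmat_iff)
qed (auto simp: voronoi_cell_Qmat_iff)

lemma extreme_point_of_voronoi_cell_Qmat_iff:
  "a extreme_point_of voronoi_cell (Qmat \<iota>) \<longleftrightarrow> edge_vec a extreme_point_of A_voronoi_cell"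
  using extreme_point_of_linear_image[OF linear_edge_vec inj_edge_vec, of a "voronoi_cell (Qmat \<iota>)"]
  by (simp add: edge_vec_voronoi_cell)

lemma bij_betw_edge_vec_extreme_points:
  fixes \<iota> :: "'g::finite option \<Rightarrow> bvert \<times> bvert"
  shows "bij_betw edge_vec {a. a extreme_point_of voronoi_cell (Qmat \<iota>)}
     (cell_vertex ` {S. S \<noteq> {} \<and> S \<noteq> UNIV})"
proof -
  have "{y. y extreme_point_of A_voronoi_cell}
      \<subseteq> edge_vec ` {a. a extreme_point_of voronoi_cell (Qmat \<iota>)}"
  proof
    fix y :: "real ^ 'g option" assume y: "y \<in> {y. y extreme_point_of A_voronoi_cell}"
    then have "y \<in> edge_vec ` voronoi_cell (Qmat \<iota>)"
      by (simp add: edge_vec_voronoi_cell extreme_point_of_def)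
    then show "y \<in> edge_vec ` {a. a extreme_point_of voronoi_cell (Qmat \<iota>)}"
      using y extreme_point_of_voronoi_cell_Qmat_iff by fastforce
  qed
  then have "edge_vec ` {a. a extreme_point_of voronoi_cell (Qmat \<iota>)}
      = {y. y extreme_point_of A_voronoi_cell}"
    using extreme_point_of_voronoi_cell_Qmat_iff by blast
  then show ?thesis
    using inj_edge_vec extreme_points_A_voronoi_cell[OF card_option_ge_2]
    by (simp add: bij_betw_def inj_on_subset[OF inj_edge_vec])
qed

definition sign_orientation :: "real ^ 'e \<Rightarrow> 'e \<Rightarrow> bvert \<times> bvert" where
  "sign_orientation x e = (if 0 < x $ e then (V2, V1) else (V1, V2))"

lemma ori_of_vertex_eq_sign_orientation:
  assumes "is_orientation \<iota>" "\<And>e. edge_vec a $ e \<noteq> 0"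
  shows "ori_of_vertex \<iota> a = sign_orientation (edge_vec a)"
proof
  fix e
  have "\<iota> e = (V2, V1) \<or> \<iota> e = (V1, V2)" using assms(1) by (simp add: is_orientation_def)
  then show "ori_of_vertex \<iota> a e = sign_orientation (edge_vec a) e"
    using assms(2)[of e] unfolding ori_of_vertex_def transpose_Bmat_mult
    by (auto simp: sign_orientation_def edge_sign_def zero_less_mult_iff)
qed

lemma strongly_connected_ori_iff:
  assumes "is_orientation \<kappa>"
  shows "strongly_connected_ori \<kappa> \<longleftrightarrow> (V2, V1) \<in> range \<kappa> \<and> (V1, V2) \<in> range \<kappa>"
proof
  have edge: "(u, v) \<in> range \<kappa>" if path: "(u, v) \<in> (range \<kappa>)\<^sup>*" and "u \<noteq> v" for u v
  proof -
    from path obtain w where step: "(u, w) \<in> range \<kappa>"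
      using \<open>u \<noteq> v\<close> by (cases rule: converse_rtranclE) auto
    then obtain e where "\<kappa> e = (u, w)" by auto
    moreover have "\<kappa> e = (V2, V1) \<or> \<kappa> e = (V1, V2)" using assms by (simp add: is_orientation_def)
    ultimately have "w \<noteq> u" by auto
    then show ?thesis using step \<open>u \<noteq> v\<close> by (cases u; cases v; cases w) auto
  qed
  assume "strongly_connected_ori \<kappa>"
  then show "(V2, V1) \<in> range \<kappa> \<and> (V1, V2) \<in> range \<kappa>"
    using edge by (simp add: strongly_connected_ori_def)
next
  assume both: "(V2, V1) \<in> range \<kappa> \<and> (V1, V2) \<in> range \<kappa>"
  then show "strongly_connected_ori \<kappa>"
    unfolding strongly_connected_ori_def
  proof (intro allI)
    fix u v show "(u, v) \<in> (range \<kappa>)\<^sup>*" using both by (cases u; cases v) auto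
  qed
qed

definition ori_of_edge_set :: "'e set \<Rightarrow> 'e \<Rightarrow> bvert \<times> bvert" where
  "ori_of_edge_set S e = (if e \<in> S then (V1, V2) else (V2, V1))"

lemma bij_betw_ori_of_edge_set:
  "bij_betw ori_of_edge_set {S. S \<noteq> {} \<and> S \<noteq> UNIV}
     {\<kappa>. is_orientation \<kappa> \<and> strongly_connected_ori \<kappa>}"
proof (rule bij_betw_byWitness[where f' = "\<lambda>\<kappa>. {e. \<kappa> e = (V1, V2)}"])
  show "ori_of_edge_set ` {S. S \<noteq> {} \<and> S \<noteq> UNIV}
      \<subseteq> {\<kappa>. is_orientation \<kappa> \<and> strongly_connected_ori \<kappa>}"
    by (auto simp: strongly_connected_ori_iff is_orientation_def ori_of_edge_set_def image_iff)
  show "(\<lambda>\<kappa>. {e. \<kappa> e = (V1, V2)}) ` {\<kappa>. is_orientation \<kappa> \<and> strongly_connected_ori \<kappa>}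
      \<subseteq> {S. S \<noteq> {} \<and> S \<noteq> UNIV}"
  proof (intro image_subsetI CollectI conjI)
    fix \<kappa> assume "\<kappa> \<in> {\<kappa>. is_orientation \<kappa> \<and> strongly_connected_ori \<kappa>}"
    then obtain p q where "\<kappa> p = (V2, V1)" "\<kappa> q = (V1, V2)"
      by (auto simp: strongly_connected_ori_iff)
    then have "q \<in> {e. \<kappa> e = (V1, V2)}" "p \<notin> {e. \<kappa> e = (V1, V2)}" by simp_all
    then show "{e. \<kappa> e = (V1, V2)} \<noteq> {}" "{e. \<kappa> e = (V1, V2)} \<noteq> UNIV" by blast+
  qed
  show "\<forall>\<kappa>\<in>{\<kappa>. is_orientation \<kappa> \<and> strongly_connected_ori \<kappa>}.
      ori_of_edge_set {e. \<kappa> e = (V1, V2)} = \<kappa>"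
  proof
    fix \<kappa> assume "\<kappa> \<in> {\<kappa>. is_orientation \<kappa> \<and> strongly_connected_ori \<kappa>}"
    then have two: "\<kappa> e = (V2, V1) \<or> \<kappa> e = (V1, V2)" for e by (simp add: is_orientation_def)
    show "ori_of_edge_set {e. \<kappa> e = (V1, V2)} = \<kappa>"
    proof
      fix e show "ori_of_edge_set {e. \<kappa> e = (V1, V2)} e = \<kappa> e"
        using two[of e] by (auto simp: ori_of_edge_set_def)
    qed
  qed
qed (simp add: ori_of_edge_set_def fun_eq_iff)

lemma sign_orientation_cell_vertex:
  assumes "S \<noteq> {}" "S \<noteq> UNIV"
  shows "sign_orientation (cell_vertex S) = ori_of_edge_set S"
  using cell_vertex_pos_iff[OF assms] by (auto simp: sign_orientation_def ori_of_edge_set_def)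

theorem theorem3p10:
  fixes \<iota> :: "('g::finite) option \<Rightarrow> bvert \<times> bvert"
  assumes "is_orientation \<iota>"
  shows "(\<forall>a. a extreme_point_of voronoi_cell (Qmat \<iota>) \<longrightarrow>
             (\<forall>e. (transpose (Bmat \<iota>) *v a) $ e \<noteq> 0))
       \<and> bij_betw (ori_of_vertex \<iota>) {a. a extreme_point_of voronoi_cell (Qmat \<iota>)}
                 {\<kappa>. is_orientation \<kappa> \<and> strongly_connected_ori \<kappa>}
       \<and> (\<forall>\<iota>'. is_orientation \<iota>' \<longrightarrow>
             (\<forall>a. a extreme_point_of voronoi_cell (Qmat \<iota>) \<longrightarrow>
                  ori_of_vertex \<iota>' a = ori_of_vertex \<iota> a))"
proof -
  let ?E = "{a. a extreme_point_of voronoi_cell (Qmat \<iota>)}"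
  let ?P = "{S :: 'g option set. S \<noteq> {} \<and> S \<noteq> UNIV}"
  let ?O = "{\<kappa>. is_orientation \<kappa> \<and> strongly_connected_ori \<kappa>}"
  have edge_vec_E: "bij_betw edge_vec ?E (cell_vertex ` ?P)"
    by (rule bij_betw_edge_vec_extreme_points)
  have nonzero: "edge_vec a $ e \<noteq> 0" if a: "a \<in> ?E" for a e
  proof -
    obtain S where "S \<in> ?P" "edge_vec a = cell_vertex S"
      using bij_betw_apply[OF edge_vec_E a] by blast
    then show ?thesis by (simp add: cell_vertex_nonzero)
  qed
  have ori: "ori_of_vertex \<kappa> a = sign_orientation (edge_vec a)"
    if "is_orientation \<kappa>" "a \<in> ?E" for \<kappa> a
    using ori_of_vertex_eq_sign_orientation[OF that(1) nonzero[OF that(2)]] .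
  have "bij_betw (sign_orientation \<circ> cell_vertex) ?P ?O"
    using bij_betw_ori_of_edge_set
    by (rule bij_betw_cong[THEN iffD1, rotated]) (simp add: sign_orientation_cell_vertex)
  then have "bij_betw sign_orientation (cell_vertex ` ?P) ?O"
    by (rule bij_betw_comp_iff[OF inj_on_imp_bij_betw[OF inj_on_cell_vertex], THEN iffD2])
  then have "bij_betw (sign_orientation \<circ> edge_vec) ?E ?O"
    by (rule bij_betw_comp_iff[OF edge_vec_E, THEN iffD1])
  then have "bij_betw (ori_of_vertex \<iota>) ?E ?O"
    by (rule bij_betw_cong[THEN iffD1, rotated]) (simp add: ori[OF assms])
  moreover have "(transpose (Bmat \<iota>) *v a) $ e \<noteq> 0" if "a \<in> ?E" for a e
    using nonzero[OF that] unfolding transpose_Bmat_mult by (simp add: edge_sign_def)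
  ultimately show ?thesis using ori assms by simp
qed

end
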